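(* Let $G$ be a graph on $n$ nodes with $m$ edges, and let $k\in\{1,\dots,n\}$ be the index satisfying $\lambda_k(G)>\frac{2m}{n}\ge\lambda_{k+1}(G)$. Then every threshold graph $T$ on $n$ nodes with $m$ edges satisfying $\sum_{i=1}^k d_i^*(T)\ge\sum_{i=1}^k\lambda_i(G)$ also satisfies $LE(T)\ge LE(G)$.
   Context: All graphs are finite and simple. For a graph $G$ on $n$ nodes with $m$ edges, the Laplacian eigenvalues (eigenvalues of $L(G)=D(G)-A(G)$) are $\lambda_1(G)\ge\dots\ge\lambda_n(G)=0$, and the Laplacian energy is $LE(G)=\sum_{i=1}^n\left|\lambda_i(G)-\frac{2m}{n}\right|$. For a graph with degrees $d_1\ge\dots\ge d_n$, the conjugate degrees are $d_i^*=|\{j: d_j\ge i\}|$. A threshold graph is a graph obtainable from the empty graph by repeatedly adding a new node that is either isolated or adjacent to all previously added nodes; for a threshold graph $T$ one has $\lambda_i(T)=d_i^*(T)$ for all $i$. *)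

theory Defs
  imports "Jordan_Normal_Form.Char_Poly" "HOL-Computational_Algebra.Polynomial"
begin

definition simple_graph :: "nat \<Rightarrow> (nat \<Rightarrow> nat \<Rightarrow> bool) \<Rightarrow> bool" where
  "simple_graph n E \<longleftrightarrow> (\<forall>i j. E i j \<longrightarrow> i < n \<and> j < n \<and> i \<noteq> j \<and> E j i)"

definition num_edges :: "nat \<Rightarrow> (nat \<Rightarrow> nat \<Rightarrow> bool) \<Rightarrow> nat" where
  "num_edges n E = card {(i, j). i < j \<and> j < n \<and> E i j}"

definition degree :: "nat \<Rightarrow> (nat \<Rightarrow> nat \<Rightarrow> bool) \<Rightarrow> nat \<Rightarrow> nat" where
  "degree n E v = card {u. u < n \<and> E v u}"

definition conj_degree :: "nat \<Rightarrow> (nat \<Rightarrow> nat \<Rightarrow> bool) \<Rightarrow> nat \<Rightarrow> nat" where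
  "conj_degree n E i = card {v. v < n \<and> degree n E v \<ge> i}"

definition laplacian :: "nat \<Rightarrow> (nat \<Rightarrow> nat \<Rightarrow> bool) \<Rightarrow> real mat" where
  "laplacian n E = mat n n (\<lambda>(i, j). if i = j then real (degree n E i)
                                      else if E i j then -1 else 0)"

text \<open>Laplacian eigenvalues with multiplicity, in non-increasing order:
  lap_eigs ! (i-1) is lambda_i.\<close>
definition lap_eigs :: "nat \<Rightarrow> (nat \<Rightarrow> nat \<Rightarrow> bool) \<Rightarrow> real list" where
  "lap_eigs n E = (THE xs. length xs = n \<and> sorted_wrt (\<ge>) xs \<and>
      char_poly (laplacian n E) = prod_list (map (\<lambda>a. [:- a, 1:]) xs))"

definition lap_energy :: "nat \<Rightarrow> (nat \<Rightarrow> nat \<Rightarrow> bool) \<Rightarrow> real" where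
  "lap_energy n E = (\<Sum>x\<leftarrow>lap_eigs n E. \<bar>x - 2 * real (num_edges n E) / real n\<bar>)"

text \<open>Threshold graph: there is an ordering sigma of the nodes (the order of
  insertion) and a choice dom j (node added at step j is dominating or isolated)
  such that two nodes inserted at steps i < j are adjacent iff dom j.\<close>
definition threshold_graph :: "nat \<Rightarrow> (nat \<Rightarrow> nat \<Rightarrow> bool) \<Rightarrow> bool" where
  "threshold_graph n E \<longleftrightarrow> simple_graph n E \<and>
     (\<exists>\<sigma> dom. bij_betw \<sigma> {0..<n} {0..<n} \<and>
        (\<forall>i<n. \<forall>j<n. i \<noteq> j \<longrightarrow> (E (\<sigma> i) (\<sigma> j) \<longleftrightarrow> dom (max i j))))"

end

theory Submission
  imports Defs "Jordan_Normal_Form.Schur_Decomposition"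
begin

text \<open>
  The Laplacian eigenvalues of a graph with \<open>m\<close> edges sum to the trace \<open>2m\<close>, so the deviations
  \<open>\<lambda>\<^sub>i - 2m/n\<close> sum to zero. Hence for every cut-off \<open>k\<close> the energy is at least twice the sum of
  the first \<open>k\<close> deviations, with equality when \<open>k\<close> is exactly where the sorted deviations change
  sign. For \<open>G\<close> this is the given \<open>k\<close>; for the threshold graph \<open>T\<close>, whose Laplacian spectrum
  is its conjugate degree sequence, the inequality with the same \<open>k\<close> and the hypothesis on the
  partial sums give \<open>LE(T) \<ge> LE(G)\<close>.

  The spectrum of \<open>T\<close> is computed from explicit eigenvectors: numbering the nodes by insertion
  step, the vector that is \<open>1\<close> on the first \<open>j\<close> nodes, \<open>-j\<close> on node \<open>j\<close> and \<open>0\<close> afterwards is an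
  eigenvector, and an induction on the number of nodes shows that the resulting eigenvalues form
  the multiset of conjugate degrees. That the spectrum is well defined rests on real symmetric
  matrices having real eigenvalues; the trace formula comes from a Schur decomposition.
\<close>

section \<open>Real symmetric matrices and the trace\<close>

lemma mset_eq_if_linear_factors_eq:
  fixes xs ys :: "'a::field list"
  assumes "(\<Prod>a\<leftarrow>xs. [:- a, 1:]) = (\<Prod>a\<leftarrow>ys. [:- a, 1:])"
  shows "mset xs = mset ys"
  using assms
proof (induction xs arbitrary: ys)
  case Nil
  have "Polynomial.degree (\<Prod>a\<leftarrow>ys. [:- a, 1:]) = length ys"
    using degree_linear_factors[of uminus ys] by simp
  with Nil show ?case by simp
next
  case (Cons x xs)
  have "poly (\<Prod>a\<leftarrow>ys. [:- a, 1:]) x = 0"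
    using Cons.prems[symmetric] by simp
  then have x: "x \<in> set ys" by (auto simp: poly_prod_list_zero_iff)
  have "[:- x, 1:] * (\<Prod>a\<leftarrow>xs. [:- a, 1:]) = [:- x, 1:] * (\<Prod>a\<leftarrow>remove1 x ys. [:- a, 1:])"
    using Cons.prems prod_list_map_remove1[OF x, of "\<lambda>a. [:- a, 1:]"] by simp
  then have "(\<Prod>a\<leftarrow>xs. [:- a, 1:]) = (\<Prod>a\<leftarrow>remove1 x ys. [:- a, 1:])"
    by (subst (asm) mult_left_cancel) auto
  from Cons.IH[OF this] x show ?case by simp
qed

lemma linear_factors_eq_if_mset_eq:
  "mset xs = mset ys \<Longrightarrow> (\<Prod>a\<leftarrow>xs. [:- a, 1:]) = (\<Prod>a\<leftarrow>ys. [:- a, 1:])"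
  by (simp only: prod_mset_prod_list[symmetric] mset_map)

lemma sorted_desc_eq_if_mset_eq:
  fixes xs ys :: "'a::linorder list"
  assumes "sorted_wrt (\<ge>) xs" "sorted_wrt (\<ge>) ys" "mset xs = mset ys"
  shows "xs = ys"
proof -
  have "sorted (rev xs)" "sorted (rev ys)"
    using assms(1,2) by (auto simp: sorted_wrt_rev)
  with assms(3) have "rev xs = rev ys"
    by (metis mset_rev properties_for_sort sorted_sort_id)
  then show ?thesis by simp
qed

lemma eigenvalue_real_if_symmetric:
  fixes A :: "real mat"
  assumes A: "A \<in> carrier_mat n n"
    and sym: "\<And>i j. i < n \<Longrightarrow> j < n \<Longrightarrow> A $$ (i,j) = A $$ (j,i)"
    and root: "poly (char_poly (map_mat complex_of_real A)) e = 0"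
  shows "Im e = 0"
proof -
  let ?B = "map_mat complex_of_real A"
  have B: "?B \<in> carrier_mat n n" using A by simp
  from root eigenvalue_root_char_poly[OF B] obtain v where "eigenvector ?B v e"
    unfolding eigenvalue_def by blast
  then have v: "v \<in> carrier_vec n" "v \<noteq> 0\<^sub>v n" "?B *\<^sub>v v = e \<cdot>\<^sub>v v"
    unfolding eigenvector_def using B by auto
  have Av: "(\<Sum>j<n. complex_of_real (A $$ (i,j)) * v $ j) = e * v $ i" if "i < n" for i
  proof -
    have "(?B *\<^sub>v v) $ i = (\<Sum>j<n. complex_of_real (A $$ (i,j)) * v $ j)"
      using that A v by (subst index_mult_mat_vec) (auto simp: scalar_prod_def lessThan_atLeast0 intro!: sum.cong)
    moreover have "(?B *\<^sub>v v) $ i = e * v $ i" using v that by simp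
    ultimately show ?thesis by simp
  qed
  define s where "s = (\<Sum>i<n. \<Sum>j<n. cnj (v $ i) * complex_of_real (A $$ (i,j)) * v $ j)"
  define N where "N = (\<Sum>i<n. cmod (v $ i) ^ 2)"
  \<comment> \<open>The form \<open>s = v\<^sup>* A v\<close> is real by symmetry and equals \<open>e |v|\<^sup>2\<close>.\<close>
  have s_eq: "s = e * complex_of_real N"
  proof -
    have "s = (\<Sum>i<n. cnj (v $ i) * (\<Sum>j<n. complex_of_real (A $$ (i,j)) * v $ j))"
      unfolding s_def by (simp add: sum_distrib_left mult.assoc)
    also have "\<dots> = (\<Sum>i<n. e * (cnj (v $ i) * v $ i))" by (rule sum.cong) (auto simp: Av)
    also have "\<dots> = e * complex_of_real N" unfolding N_def
      by (simp add: sum_distrib_left of_real_sum mult.commute flip: of_real_power complex_norm_square)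
    finally show ?thesis .
  qed
  have "cnj s = (\<Sum>i<n. \<Sum>j<n. v $ i * complex_of_real (A $$ (i,j)) * cnj (v $ j))"
    unfolding s_def by simp
  also have "\<dots> = (\<Sum>j<n. \<Sum>i<n. v $ i * complex_of_real (A $$ (i,j)) * cnj (v $ j))"
    by (rule sum.swap)
  also have "\<dots> = s" unfolding s_def
    by (intro sum.cong refl) (simp add: sym mult.commute mult.left_commute)
  finally have "Im s = 0" by (metis Reals_cnj_iff complex_is_Real_iff)
  have "N \<noteq> 0"
  proof
    assume "N = 0"
    then have "\<forall>i\<in>{..<n}. cmod (v $ i) ^ 2 = 0" unfolding N_def
      by (subst (asm) sum_nonneg_eq_0_iff) auto
    then have "v = 0\<^sub>v n" using v(1) by (intro eq_vecI) auto
    with v(2) show False by simp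
  qed
  with s_eq \<open>Im s = 0\<close> show ?thesis by simp
qed

interpretation of_real_poly_hom: map_poly_inj_comm_ring_hom "of_real :: real \<Rightarrow> complex" ..

lemma map_poly_of_real_linear_factors:
  "map_poly (of_real :: real \<Rightarrow> complex) (\<Prod>a\<leftarrow>xs. [:- a, 1:]) = (\<Prod>a\<leftarrow>map of_real xs. [:- a, 1:])"
proof (induction xs)
  case (Cons a xs)
  have "map_poly (of_real :: real \<Rightarrow> complex) [:- a, 1:] = [:- of_real a, 1:]" by simp
  with Cons show ?case by (simp only: list.map prod_list.Cons of_real_poly_hom.hom_mult)
qed simp

lemma char_poly_splits_if_symmetric:
  fixes A :: "real mat"
  assumes A: "A \<in> carrier_mat n n"
    and sym: "\<And>i j. i < n \<Longrightarrow> j < n \<Longrightarrow> A $$ (i,j) = A $$ (j,i)"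
  obtains xs where "length xs = n" "char_poly A = (\<Prod>a\<leftarrow>xs. [:- a, 1:])"
proof -
  let ?B = "map_mat complex_of_real A"
  obtain es where es: "char_poly ?B = (\<Prod>e\<leftarrow>es. [:- e, 1:])" "length es = n"
    using char_poly_factorized[of ?B n] A by auto
  have "Im e = 0" if "e \<in> set es" for e
    by (rule eigenvalue_real_if_symmetric[OF A sym]) (use es(1) that linear_poly_root in auto)
  then have "map of_real (map Re es) = es" by (induction es) (auto simp: complex_eq_iff)
  then have "map_poly of_real (\<Prod>x\<leftarrow>map Re es. [:- x, 1:]) = (\<Prod>e\<leftarrow>es. [:- e, 1:])"
    by (simp only: map_poly_of_real_linear_factors)
  also have "\<dots> = map_poly of_real (char_poly A)"
    using es(1) of_real_hom.char_poly_hom[OF A] by metis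
  finally have "char_poly A = (\<Prod>x\<leftarrow>map Re es. [:- x, 1:])" by simp
  with es(2) show thesis by (intro that[of "map Re es"]) auto
qed

definition mat_trace :: "'a::comm_ring_1 mat \<Rightarrow> 'a" where
  "mat_trace A = (\<Sum>i<dim_row A. A $$ (i,i))"

lemma mat_trace_mult_comm:
  assumes "X \<in> carrier_mat n n" "Y \<in> carrier_mat n n"
  shows "mat_trace (X * Y) = mat_trace (Y * X)"
proof -
  have "mat_trace (X * Y) = (\<Sum>i<n. \<Sum>j<n. X $$ (i,j) * Y $$ (j,i))"
    unfolding mat_trace_def using assms
    by (auto simp: scalar_prod_def lessThan_atLeast0 intro!: sum.cong)
  also have "\<dots> = (\<Sum>j<n. \<Sum>i<n. X $$ (i,j) * Y $$ (j,i))" by (rule sum.swap)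
  also have "\<dots> = mat_trace (Y * X)"
    unfolding mat_trace_def using assms
    by (auto simp: scalar_prod_def lessThan_atLeast0 mult.commute intro!: sum.cong)
  finally show ?thesis .
qed

lemma mat_trace_similar:
  assumes "similar_mat A B"
  shows "mat_trace A = mat_trace B"
proof -
  from assms obtain P Q where w: "similar_mat_wit A B P Q" unfolding similar_mat_def by blast
  note W = similar_mat_witD[OF refl w]
  have "mat_trace A = mat_trace (P * (B * Q))"
    by (subst W(3), rule arg_cong[where f=mat_trace], rule assoc_mult_mat[OF W(6,5,7)])
  also have "\<dots> = mat_trace (B * Q * P)" by (rule mat_trace_mult_comm) (use W(5-7) in auto)
  also have "B * Q * P = B"
    unfolding assoc_mult_mat[OF W(5,7,6)] W(2) by (rule right_mult_one_mat[OF W(5)])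
  finally show ?thesis .
qed

lemma mat_trace_eq_sum_eigenvalues:
  fixes A :: "'a::conjugatable_ordered_field mat"
  assumes A: "A \<in> carrier_mat n n" and c: "char_poly A = (\<Prod>e\<leftarrow>es. [:- e, 1:])"
  shows "mat_trace A = sum_list es"
proof -
  obtain B P Q where "schur_decomposition A es = (B,P,Q)" by (cases "schur_decomposition A es")
  from schur_decomposition[OF A c this]
  have "similar_mat A B" "diag_mat B = es" unfolding similar_mat_def by auto
  then have "mat_trace A = mat_trace B" "es = map (\<lambda>i. B $$ (i,i)) [0..<dim_row B]"
    by (auto simp: mat_trace_similar diag_mat_def)
  then show ?thesis by (simp add: mat_trace_def sum_list_sum_nth lessThan_atLeast0)
qed

section \<open>The Laplacian spectrum\<close>

lemma laplacian_carrier_mat: "laplacian n E \<in> carrier_mat n n"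
  unfolding laplacian_def by simp

lemma laplacian_symmetric:
  assumes "simple_graph n E" "i < n" "j < n"
  shows "laplacian n E $$ (i,j) = laplacian n E $$ (j,i)"
  using assms unfolding laplacian_def simple_graph_def by auto

lemma lap_eigs_unique:
  assumes "sorted_wrt (\<ge>) xs" "char_poly (laplacian n E) = (\<Prod>a\<leftarrow>xs. [:- a, 1:])"
    and "sorted_wrt (\<ge>) ys" "char_poly (laplacian n E) = (\<Prod>a\<leftarrow>ys. [:- a, 1:])"
  shows "xs = ys"
  using assms by (metis sorted_desc_eq_if_mset_eq mset_eq_if_linear_factors_eq)

lemma lap_eigs_spec:
  assumes "simple_graph n E"
  shows "length (lap_eigs n E) = n" "sorted_wrt (\<ge>) (lap_eigs n E)"
    "char_poly (laplacian n E) = (\<Prod>a\<leftarrow>lap_eigs n E. [:- a, 1:])"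
proof -
  obtain xs where xs: "length xs = n" "char_poly (laplacian n E) = (\<Prod>a\<leftarrow>xs. [:- a, 1:])"
    using char_poly_splits_if_symmetric[OF laplacian_carrier_mat laplacian_symmetric[OF assms]] .
  define ys where "ys = rev (sort xs)"
  have ys: "length ys = n \<and> sorted_wrt (\<ge>) ys \<and> char_poly (laplacian n E) = (\<Prod>a\<leftarrow>ys. [:- a, 1:])"
    using xs linear_factors_eq_if_mset_eq[of ys xs] unfolding ys_def by (simp add: sorted_wrt_rev)
  have "length (lap_eigs n E) = n \<and> sorted_wrt (\<ge>) (lap_eigs n E)
      \<and> char_poly (laplacian n E) = (\<Prod>a\<leftarrow>lap_eigs n E. [:- a, 1:])"
    unfolding lap_eigs_def by (rule theI[of _ ys]) (use ys lap_eigs_unique in blast)+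
  then show "length (lap_eigs n E) = n" "sorted_wrt (\<ge>) (lap_eigs n E)"
    "char_poly (laplacian n E) = (\<Prod>a\<leftarrow>lap_eigs n E. [:- a, 1:])" by auto
qed

lemma lap_eigs_eqI:
  assumes "simple_graph n E" "sorted_wrt (\<ge>) xs"
    and "char_poly (laplacian n E) = (\<Prod>a\<leftarrow>xs. [:- a, 1:])"
  shows "lap_eigs n E = xs"
  using lap_eigs_spec[OF assms(1)] assms(2,3) by (blast intro: lap_eigs_unique)

lemma sum_degree_eq_twice_num_edges:
  assumes "simple_graph n E"
  shows "(\<Sum>i<n. degree n E i) = 2 * num_edges n E"
proof -
  let ?edges = "{(i, j). i < j \<and> j < n \<and> E i j}"
  have "(\<Sum>i<n. degree n E i) = card (SIGMA i:{..<n}. {u. u < n \<and> E i u})"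
    unfolding degree_def by (subst card_SigmaI) auto
  also have "(SIGMA i:{..<n}. {u. u < n \<and> E i u}) = ?edges \<union> prod.swap ` ?edges"
    using assms unfolding simple_graph_def
    by (auto simp: image_iff) (metis linorder_neqE_nat)+
  also have "card \<dots> = card ?edges + card (prod.swap ` ?edges)"
    by (rule card_Un_disjoint) (auto intro: finite_subset[of _ "{..<n} \<times> {..<n}"])
  also have "card (prod.swap ` ?edges) = card ?edges"
    by (rule card_image) simp
  finally show ?thesis unfolding num_edges_def by simp
qed

lemma sum_lap_eigs:
  assumes "simple_graph n E"
  shows "sum_list (lap_eigs n E) = 2 * real (num_edges n E)"
proof -
  have "sum_list (lap_eigs n E) = mat_trace (laplacian n E)"
    using mat_trace_eq_sum_eigenvalues[OF laplacian_carrier_mat lap_eigs_spec(3)[OF assms]] ..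
  also have "\<dots> = real (\<Sum>i<n. degree n E i)"
    unfolding mat_trace_def laplacian_def by simp
  finally show ?thesis using sum_degree_eq_twice_num_edges[OF assms] by simp
qed

section \<open>The spectrum of threshold graphs\<close>

text \<open>
  A threshold graph on \<open>N\<close> nodes is described by its insertion steps \<open>0..<N\<close>, node \<open>q\<close> being
  dominating iff \<open>D q\<close>; the value of \<open>D 0\<close> is irrelevant.
\<close>

definition dominating_after :: "(nat \<Rightarrow> bool) \<Rightarrow> nat \<Rightarrow> nat \<Rightarrow> nat" where
  "dominating_after D N p = card {q. p < q \<and> q < N \<and> D q}"

definition thr_degree :: "(nat \<Rightarrow> bool) \<Rightarrow> nat \<Rightarrow> nat \<Rightarrow> nat" where
  "thr_degree D N p = (if D p then p else 0) + dominating_after D N p"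

definition thr_eigenvalue :: "(nat \<Rightarrow> bool) \<Rightarrow> nat \<Rightarrow> nat \<Rightarrow> nat" where
  "thr_eigenvalue D N j = (if j = 0 then 0 else (if D j then j + 1 else 0) + dominating_after D N j)"

definition thr_conj_degree :: "(nat \<Rightarrow> bool) \<Rightarrow> nat \<Rightarrow> nat \<Rightarrow> nat" where
  "thr_conj_degree D N i = card {p. p < N \<and> i \<le> thr_degree D N p}"

lemma dominating_after_Suc:
  "dominating_after D (Suc N) p = dominating_after D N p + (if D N \<and> p < N then 1 else 0)"
proof -
  have "{q. p < q \<and> q < Suc N \<and> D q}
      = {q. p < q \<and> q < N \<and> D q} \<union> (if D N \<and> p < N then {N} else {})"
    by (auto simp: less_Suc_eq)
  then show ?thesis unfolding dominating_after_def by (auto simp: card_insert_if)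
qed

lemma dominating_after_le: "dominating_after D N p \<le> N - Suc p"
proof -
  have "dominating_after D N p \<le> card {Suc p..<N}"
    unfolding dominating_after_def by (rule card_mono) auto
  then show ?thesis by simp
qed

lemma thr_degree_less: "p < N \<Longrightarrow> thr_degree D N p < N"
  using dominating_after_le[of D N p] unfolding thr_degree_def by auto

lemma thr_conj_degree_0: "thr_conj_degree D N 0 = N"
  unfolding thr_conj_degree_def by simp

lemma thr_conj_degree_eq_0: "N \<le> i \<Longrightarrow> thr_conj_degree D N i = 0"
  unfolding thr_conj_degree_def using thr_degree_less[of _ N D]
  by (auto simp: card_eq_0_iff) (meson le_trans not_less)

lemma thr_conj_degree_antimono: "i \<le> j \<Longrightarrow> thr_conj_degree D N j \<le> thr_conj_degree D N i"
  unfolding thr_conj_degree_def by (intro card_mono) auto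

lemma thr_step_isolated:
  assumes "\<not> D N"
  shows "map (thr_eigenvalue D (Suc N)) [0..<Suc N] = map (thr_eigenvalue D N) [0..<N] @ [0]"
    and "map (thr_conj_degree D (Suc N)) [1..<Suc (Suc N)] = map (thr_conj_degree D N) [1..<Suc N] @ [0]"
proof -
  have after: "dominating_after D (Suc N) p = dominating_after D N p" for p
    using assms by (simp add: dominating_after_Suc)
  have "dominating_after D (Suc N) N = 0"
    using dominating_after_le[of D "Suc N" N] by simp
  then show "map (thr_eigenvalue D (Suc N)) [0..<Suc N] = map (thr_eigenvalue D N) [0..<N] @ [0]"
    using assms by (simp add: thr_eigenvalue_def after)
  have "thr_degree D (Suc N) N = 0"
    using assms dominating_after_le[of D "Suc N" N] by (simp add: thr_degree_def)
  then have "thr_conj_degree D (Suc N) i = thr_conj_degree D N i" if "1 \<le> i" for i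
    unfolding thr_conj_degree_def using that
    by (auto simp: less_Suc_eq thr_degree_def after intro!: arg_cong[where f=card])
  then have "map (thr_conj_degree D (Suc N)) [1..<Suc N] = map (thr_conj_degree D N) [1..<Suc N]"
    by (intro map_cong) auto
  moreover have "thr_conj_degree D (Suc N) (Suc N) = 0" by (simp add: thr_conj_degree_eq_0)
  ultimately show "map (thr_conj_degree D (Suc N)) [1..<Suc (Suc N)]
      = map (thr_conj_degree D N) [1..<Suc N] @ [0]" by simp
qed

lemma thr_step_dominating:
  assumes "D N" "0 < N"
  shows "map (thr_eigenvalue D (Suc N)) [0..<Suc N]
      = 0 # map (\<lambda>j. thr_eigenvalue D N j + 1) [1..<N] @ [N + 1]"
    and "map (thr_conj_degree D (Suc N)) [1..<Suc (Suc N)]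
      = (N + 1) # map (\<lambda>i. thr_conj_degree D N i + 1) [1..<N] @ [0]"
proof -
  have after: "p < N \<Longrightarrow> dominating_after D (Suc N) p = dominating_after D N p + 1" for p
    using assms by (simp add: dominating_after_Suc)
  have after_N: "dominating_after D (Suc N) N = 0"
    using dominating_after_le[of D "Suc N" N] by simp
  have upt_N: "[0..<N] = 0 # [1..<N]" using assms(2) by (simp add: upt_rec)
  show "map (thr_eigenvalue D (Suc N)) [0..<Suc N]
      = 0 # map (\<lambda>j. thr_eigenvalue D N j + 1) [1..<N] @ [N + 1]"
    using assms after after_N by (simp add: upt_N thr_eigenvalue_def)
  have "thr_degree D (Suc N) p = thr_degree D N p + 1" if "p < N" for p
    using that after by (simp add: thr_degree_def)
  moreover have "thr_degree D (Suc N) N = N"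
    using assms after_N by (simp add: thr_degree_def)
  ultimately have "{p. p < Suc N \<and> Suc i \<le> thr_degree D (Suc N) p}
      = {p. p < N \<and> i \<le> thr_degree D N p} \<union> (if Suc i \<le> N then {N} else {})" for i
    by (auto simp: less_Suc_eq)
  then have conj: "thr_conj_degree D (Suc N) (Suc i) = thr_conj_degree D N i + (if Suc i \<le> N then 1 else 0)"
    for i unfolding thr_conj_degree_def by (auto simp: card_insert_if)
  have "map (thr_conj_degree D (Suc N)) [1..<Suc (Suc N)]
      = map (\<lambda>i. thr_conj_degree D (Suc N) (Suc i)) (0 # [1..<N] @ [N])"
  proof -
    have "[1..<Suc (Suc N)] = map Suc [0..<Suc N]" by (simp add: map_Suc_upt)
    also have "[0..<Suc N] = 0 # [1..<N] @ [N]" by (simp add: upt_N)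
    finally show ?thesis by simp
  qed
  also have "\<dots> = (N + 1) # map (\<lambda>i. thr_conj_degree D N i + 1) [1..<N] @ [0]"
    using assms(2) by (simp add: conj thr_conj_degree_0 thr_conj_degree_eq_0)
  finally show "map (thr_conj_degree D (Suc N)) [1..<Suc (Suc N)]
      = (N + 1) # map (\<lambda>i. thr_conj_degree D N i + 1) [1..<N] @ [0]" .
qed

lemma mset_thr_eigenvalues:
  "mset (map (thr_eigenvalue D N) [0..<N]) = mset (map (thr_conj_degree D N) [1..<Suc N])"
proof (induction N)
  case (Suc N)
  consider "\<not> D N" | "D N" "N = 0" | "D N" "0 < N" by blast
  then show ?case
  proof cases
    case 1
    then show ?thesis by (simp only: thr_step_isolated[of D N, OF 1] mset_append Suc.IH)
  next
    case 2
    then show ?thesis by (simp add: thr_eigenvalue_def thr_conj_degree_eq_0)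
  next
    case 3
    have "mset (map (thr_eigenvalue D N) [0..<N]) = add_mset 0 (mset (map (thr_eigenvalue D N) [1..<N]))"
      using 3 by (simp add: upt_rec thr_eigenvalue_def)
    moreover have "mset (map (thr_conj_degree D N) [1..<Suc N])
        = add_mset 0 (mset (map (thr_conj_degree D N) [1..<N]))"
      using 3 by (simp add: thr_conj_degree_eq_0)
    ultimately have "mset (map (thr_eigenvalue D N) [1..<N]) = mset (map (thr_conj_degree D N) [1..<N])"
      using Suc.IH by simp
    then have "image_mset Suc (mset (map (thr_eigenvalue D N) [1..<N]))
        = image_mset Suc (mset (map (thr_conj_degree D N) [1..<N]))" by simp
    then have "mset (map (\<lambda>j. thr_eigenvalue D N j + 1) [1..<N])
        = mset (map (\<lambda>i. thr_conj_degree D N i + 1) [1..<N])"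
      by (simp add: image_mset.compositionality comp_def)
    then show ?thesis unfolding thr_step_dominating[of D N, OF 3] by simp
  qed
qed simp

definition thr_eigenvector :: "nat \<Rightarrow> nat \<Rightarrow> real" where
  "thr_eigenvector j q = (if j = 0 \<or> q < j then 1 else if q = j then - real j else 0)"

definition thr_eigenvector_sqnorm :: "nat \<Rightarrow> nat \<Rightarrow> real" where
  "thr_eigenvector_sqnorm N j = (if j = 0 then real N else real j + real j ^ 2)"

lemma sum_if_less_const: "j \<le> n \<Longrightarrow> (\<Sum>q<n. if q < j then c else 0) = real j * (c::real)"
proof -
  assume "j \<le> n"
  then have "{q \<in> {..<n}. q < j} = {..<j}" by auto
  then show ?thesis using sum.inter_filter[of "{..<n}" "\<lambda>_. c" "\<lambda>q. q < j"] by simp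
qed

lemma sum_dominating_after:
  "(\<Sum>q<n. if j < q \<and> D q then 1 else 0) = real (dominating_after D n j)"
proof -
  have "{q \<in> {..<n}. j < q \<and> D q} = {q. j < q \<and> q < n \<and> D q}" by auto
  then show ?thesis unfolding dominating_after_def
    using sum.inter_filter[of "{..<n}" "\<lambda>_. 1::real" "\<lambda>q. j < q \<and> D q"] by simp
qed

lemma sum_thr_eigenvector:
  "j < n \<Longrightarrow> (\<Sum>q<n. thr_eigenvector j q) = (if j = 0 then real n else 0)"
proof (cases "j = 0")
  case False
  assume "j < n"
  then have "(\<Sum>q<n. thr_eigenvector j q)
      = (\<Sum>q<n. (if q < j then 1 else 0) + (if q = j then - real j else 0))"
    by (intro sum.cong) (auto simp: thr_eigenvector_def False)
  with \<open>j < n\<close> False show ?thesis by (simp add: sum.distrib sum_if_less_const)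
qed (simp add: thr_eigenvector_def)

lemma thr_eigenvector_inner:
  assumes "i < n" "j < n"
  shows "(\<Sum>q<n. thr_eigenvector i q * thr_eigenvector j q)
    = (if i = j then thr_eigenvector_sqnorm n j else 0)"
proof -
  have orth: "(\<Sum>q<n. thr_eigenvector i q * thr_eigenvector j q) = 0" if "i < j" "j < n" for i j
  proof (cases "i = 0")
    case True
    then show ?thesis using sum_thr_eigenvector[OF that(2)] that by (simp add: thr_eigenvector_def)
  next
    case False
    \<comment> \<open>\<open>thr_eigenvector j\<close> is constant on the support of \<open>thr_eigenvector i\<close>.\<close>
    have "(\<Sum>q<n. thr_eigenvector i q * thr_eigenvector j q) = (\<Sum>q<n. thr_eigenvector i q)"
      by (rule sum.cong) (use that False in \<open>auto simp: thr_eigenvector_def\<close>)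
    then show ?thesis using sum_thr_eigenvector[of i n] that False by simp
  qed
  have norm: "(\<Sum>q<n. thr_eigenvector j q * thr_eigenvector j q) = thr_eigenvector_sqnorm n j"
  proof (cases "j = 0")
    case False
    have "(\<Sum>q<n. thr_eigenvector j q * thr_eigenvector j q)
        = (\<Sum>q<n. (if q < j then 1 else 0) + (if q = j then real j ^ 2 else 0))"
      by (rule sum.cong) (auto simp: thr_eigenvector_def False power2_eq_square)
    then show ?thesis
      using assms False by (simp add: sum.distrib sum_if_less_const thr_eigenvector_sqnorm_def)
  qed (simp add: thr_eigenvector_def thr_eigenvector_sqnorm_def)
  show ?thesis
    using orth[of i j] orth[of j i] norm assms by (auto simp: mult.commute neq_iff)
qed

lemma thr_eigenvector_sqnorm_nonzero: "j < n \<Longrightarrow> thr_eigenvector_sqnorm n j \<noteq> 0"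
  unfolding thr_eigenvector_sqnorm_def using add_pos_nonneg[of "real j" "real j ^ 2"] by auto

lemma thr_eigenvector_eq:
  assumes "j < n" "p < n"
  shows "(\<Sum>q<n. if q \<noteq> p \<and> D (max p q) then thr_eigenvector j p - thr_eigenvector j q else 0)
    = real (thr_eigenvalue D n j) * thr_eigenvector j p"
proof (cases "j = 0")
  case True
  then show ?thesis by (simp add: thr_eigenvector_def thr_eigenvalue_def)
next
  case j: False
  show ?thesis
  proof (cases p j rule: linorder_cases)
    case less
    have "(\<Sum>q<n. if q \<noteq> p \<and> D (max p q) then thr_eigenvector j p - thr_eigenvector j q else 0)
        = (\<Sum>q<n. (if q = j then (if D j then 1 + real j else 0) else 0)
            + (if j < q \<and> D q then 1 else 0))"
      by (rule sum.cong) (use less j in \<open>auto simp: thr_eigenvector_def max_def\<close>)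
    also have "\<dots> = (if D j then 1 + real j else 0) + real (dominating_after D n j)"
      using assms by (simp add: sum.distrib sum_dominating_after)
    finally show ?thesis using less j by (simp add: thr_eigenvector_def thr_eigenvalue_def)
  next
    case equal
    have "(\<Sum>q<n. if q \<noteq> p \<and> D (max p q) then thr_eigenvector j p - thr_eigenvector j q else 0)
        = (\<Sum>q<n. (if q < j then (if D j then - real j - 1 else 0) else 0))
          + (- real j) * (\<Sum>q<n. (if j < q \<and> D q then 1 else 0))"
      unfolding sum_distrib_left sum.distrib[symmetric]
      by (rule sum.cong) (use equal j in \<open>auto simp: thr_eigenvector_def max_def\<close>)
    also have "\<dots> = real j * (if D j then - real j - 1 else 0) + (- real j) * real (dominating_after D n j)"
      using assms equal by (simp only: sum_if_less_const sum_dominating_after)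
    also have "\<dots> = real (thr_eigenvalue D n j) * thr_eigenvector j p"
      using equal j by (simp add: thr_eigenvector_def thr_eigenvalue_def algebra_simps)
    finally show ?thesis .
  next
    case greater
    have "(\<Sum>q<n. if q \<noteq> p \<and> D (max p q) then thr_eigenvector j p - thr_eigenvector j q else 0)
        = (if D p then - 1 else 0) * (\<Sum>q<n. thr_eigenvector j q)"
      unfolding sum_distrib_left
      by (rule sum.cong) (use greater j in \<open>auto simp: thr_eigenvector_def max_def\<close>)
    then show ?thesis using sum_thr_eigenvector[OF assms(1)] greater j
      by (simp add: thr_eigenvector_def)
  qed
qed

lemma mat_mult_entry:
  assumes "A \<in> carrier_mat n n" "B \<in> carrier_mat n n" "i < n" "j < n"
  shows "(A * B) $$ (i,j) = (\<Sum>k<n. A $$ (i,k) * B $$ (k,j))"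
  using assms by (simp add: scalar_prod_def lessThan_atLeast0)

locale threshold_labelling =
  fixes n :: nat and T :: "nat \<Rightarrow> nat \<Rightarrow> bool" and \<sigma> :: "nat \<Rightarrow> nat" and D :: "nat \<Rightarrow> bool"
  assumes simple: "simple_graph n T" and bij: "bij_betw \<sigma> {0..<n} {0..<n}"
    and adj: "\<forall>i<n. \<forall>j<n. i \<noteq> j \<longrightarrow> (T (\<sigma> i) (\<sigma> j) \<longleftrightarrow> D (max i j))"
begin

definition insertion_step :: "nat \<Rightarrow> nat" where
  "insertion_step = inv_into {0..<n} \<sigma>"

lemma node_less: "p < n \<Longrightarrow> \<sigma> p < n"
  using bij by (auto dest: bij_betwE)

lemma insertion_step_less: "x < n \<Longrightarrow> insertion_step x < n"
  unfolding insertion_step_def using bij by (metis atLeastLessThan_iff bij_betw_def inv_into_into zero_le)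

lemma node_insertion_step: "x < n \<Longrightarrow> \<sigma> (insertion_step x) = x"
  unfolding insertion_step_def using bij by (metis atLeastLessThan_iff bij_betw_def f_inv_into_f zero_le)

lemma insertion_step_node: "p < n \<Longrightarrow> insertion_step (\<sigma> p) = p"
  unfolding insertion_step_def using bij by (metis atLeastLessThan_iff bij_betw_def inv_into_f_f zero_le)

lemma sum_reindex: "(\<Sum>x<n. g x) = (\<Sum>q<n. g (\<sigma> q))"
  using sum.reindex_bij_betw[OF bij, of g] by (simp add: lessThan_atLeast0)

lemma card_reindex: "card {x. x < n \<and> P x} = card {q. q < n \<and> P (\<sigma> q)}"
proof -
  have "{x. x < n \<and> P x} = \<sigma> ` {q. q < n \<and> P (\<sigma> q)}"
    by (auto simp: node_less image_iff) (metis insertion_step_less node_insertion_step)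
  moreover have "inj_on \<sigma> {q. q < n \<and> P (\<sigma> q)}"
    using bij unfolding bij_betw_def by (auto intro: inj_on_subset)
  ultimately show ?thesis by (simp add: card_image)
qed

lemma adjacent_iff: "p < n \<Longrightarrow> q < n \<Longrightarrow> T (\<sigma> p) (\<sigma> q) \<longleftrightarrow> q \<noteq> p \<and> D (max p q)"
  using adj simple unfolding simple_graph_def by auto

lemma degree_node: "p < n \<Longrightarrow> degree n T (\<sigma> p) = card {q. q < n \<and> q \<noteq> p \<and> D (max p q)}"
  unfolding degree_def by (subst card_reindex) (auto simp: adjacent_iff intro!: arg_cong[where f=card])

lemma degree_eq_thr_degree:
  assumes "p < n"
  shows "degree n T (\<sigma> p) = thr_degree D n p"
proof -
  have "{q. q < n \<and> q \<noteq> p \<and> D (max p q)}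
      = (if D p then {..<p} else {}) \<union> {q. p < q \<and> q < n \<and> D q}"
    using assms by (auto simp: max_def)
  moreover have "card ((if D p then {..<p} else {}) \<union> {q. p < q \<and> q < n \<and> D q})
      = (if D p then p else 0) + dominating_after D n p"
    unfolding dominating_after_def by (subst card_Un_disjoint) auto
  ultimately show ?thesis using degree_node[OF assms] unfolding thr_degree_def by simp
qed

lemma conj_degree_eq_thr_conj_degree: "conj_degree n T i = thr_conj_degree D n i"
  unfolding conj_degree_def thr_conj_degree_def
  by (subst card_reindex) (auto simp: degree_eq_thr_degree intro!: arg_cong[where f=card])

lemma laplacian_node:
  assumes "p < n" "q < n"
  shows "laplacian n T $$ (\<sigma> p, \<sigma> q)
    = (if q = p then real (degree n T (\<sigma> p)) else if D (max p q) then -1 else 0)"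
proof -
  have "\<sigma> p = \<sigma> q \<longleftrightarrow> p = q"
    using bij assms unfolding bij_betw_def by (metis atLeastLessThan_iff inj_on_eq_iff zero_le)
  then show ?thesis
    unfolding laplacian_def using node_less assms by (auto simp: adjacent_iff)
qed

lemma laplacian_mult_node:
  assumes "p < n"
  shows "(\<Sum>q<n. laplacian n T $$ (\<sigma> p, \<sigma> q) * w q)
    = (\<Sum>q<n. if q \<noteq> p \<and> D (max p q) then w p - w q else 0)"
proof -
  have deg: "real (degree n T (\<sigma> p)) = (\<Sum>q<n. if q \<noteq> p \<and> D (max p q) then 1 else 0)"
  proof -
    have "{q \<in> {..<n}. q \<noteq> p \<and> D (max p q)} = {q. q < n \<and> q \<noteq> p \<and> D (max p q)}" by auto
    then show ?thesis using degree_node[OF assms]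
      sum.inter_filter[of "{..<n}" "\<lambda>_. 1::real" "\<lambda>q. q \<noteq> p \<and> D (max p q)"] by simp
  qed
  have "(\<Sum>q<n. laplacian n T $$ (\<sigma> p, \<sigma> q) * w q)
      = real (degree n T (\<sigma> p)) * w p - (\<Sum>q<n. if q \<noteq> p \<and> D (max p q) then w q else 0)"
  proof -
    have "(\<Sum>q<n. laplacian n T $$ (\<sigma> p, \<sigma> q) * w q)
        = (\<Sum>q<n. (if q = p then real (degree n T (\<sigma> p)) * w p else 0)
            - (if q \<noteq> p \<and> D (max p q) then w q else 0))"
      by (rule sum.cong) (auto simp: laplacian_node assms)
    then show ?thesis using assms by (simp add: sum_subtractf)
  qed
  also have "\<dots> = (\<Sum>q<n. if q \<noteq> p \<and> D (max p q) then w p - w q else 0)"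
    unfolding deg sum_distrib_right sum_subtractf[symmetric] by (rule sum.cong) auto
  finally show ?thesis .
qed

definition eigvec_mat :: "real mat" where
  "eigvec_mat = mat n n (\<lambda>(x, j). thr_eigenvector j (insertion_step x))"

definition eigval_mat :: "real mat" where
  "eigval_mat = mat n n (\<lambda>(i, j). if i = j then real (thr_eigenvalue D n i) else 0)"

definition eigvec_mat_inv :: "real mat" where
  "eigvec_mat_inv = mat n n (\<lambda>(j, x). thr_eigenvector j (insertion_step x) / thr_eigenvector_sqnorm n j)"

lemma carrier_mats:
  "eigvec_mat \<in> carrier_mat n n" "eigval_mat \<in> carrier_mat n n" "eigvec_mat_inv \<in> carrier_mat n n"
  unfolding eigvec_mat_def eigval_mat_def eigvec_mat_inv_def by auto

lemma laplacian_eigvec_mat: "laplacian n T * eigvec_mat = eigvec_mat * eigval_mat"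
proof (rule eq_matI)
  fix x j assume "x < dim_row (eigvec_mat * eigval_mat)" "j < dim_col (eigvec_mat * eigval_mat)"
  then have x: "x < n" and j: "j < n" using carrier_mats by auto
  define p where "p = insertion_step x"
  have p: "p < n" "\<sigma> p = x" using insertion_step_less node_insertion_step x unfolding p_def by auto
  have "(laplacian n T * eigvec_mat) $$ (x,j)
      = (\<Sum>y<n. laplacian n T $$ (x,y) * thr_eigenvector j (insertion_step y))"
    using x j by (subst mat_mult_entry[OF laplacian_carrier_mat carrier_mats(1)])
      (auto simp: eigvec_mat_def intro!: sum.cong)
  also have "\<dots> = (\<Sum>q<n. laplacian n T $$ (\<sigma> p, \<sigma> q) * thr_eigenvector j q)"
    by (subst sum_reindex) (simp add: p insertion_step_node)
  also have "\<dots> = real (thr_eigenvalue D n j) * thr_eigenvector j p"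
    unfolding laplacian_mult_node[OF p(1)] by (rule thr_eigenvector_eq[OF j p(1)])
  also have "\<dots> = (eigvec_mat * eigval_mat) $$ (x,j)"
    using x j by (subst mat_mult_entry[OF carrier_mats(1,2)])
      (simp_all add: eigvec_mat_def eigval_mat_def p_def if_distrib[of "\<lambda>y. _ * y"] cong: if_cong)
  finally show "(laplacian n T * eigvec_mat) $$ (x,j) = (eigvec_mat * eigval_mat) $$ (x,j)" .
qed (use carrier_mats laplacian_carrier_mat in auto)

lemma eigvec_mat_inv_mult: "eigvec_mat_inv * eigvec_mat = 1\<^sub>m n"
proof (rule eq_matI)
  fix i j assume "i < dim_row (1\<^sub>m n :: real mat)" "j < dim_col (1\<^sub>m n :: real mat)"
  then have i: "i < n" and j: "j < n" by auto
  have "(eigvec_mat_inv * eigvec_mat) $$ (i,j)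
      = (\<Sum>x<n. thr_eigenvector i (insertion_step x) / thr_eigenvector_sqnorm n i
          * thr_eigenvector j (insertion_step x))"
    using i j by (subst mat_mult_entry[OF carrier_mats(3,1)])
      (auto simp: eigvec_mat_def eigvec_mat_inv_def intro!: sum.cong)
  also have "\<dots> = (\<Sum>q<n. thr_eigenvector i q * thr_eigenvector j q) / thr_eigenvector_sqnorm n i"
    by (subst sum_reindex) (simp add: insertion_step_node sum_divide_distrib)
  also have "\<dots> = 1\<^sub>m n $$ (i,j)"
    using thr_eigenvector_inner[OF i j] thr_eigenvector_sqnorm_nonzero[OF j] i j by simp
  finally show "(eigvec_mat_inv * eigvec_mat) $$ (i,j) = 1\<^sub>m n $$ (i,j)" .
qed (use carrier_mats in auto)

lemma char_poly_laplacian: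
  "char_poly (laplacian n T) = (\<Prod>a\<leftarrow>map (\<lambda>i. real (thr_eigenvalue D n i)) [0..<n]. [:- a, 1:])"
proof -
  note C = carrier_mats laplacian_carrier_mat[of n T]
  have inv: "eigvec_mat * eigvec_mat_inv = 1\<^sub>m n"
    by (rule mat_mult_left_right_inverse[OF C(3,1) eigvec_mat_inv_mult])
  have "laplacian n T = laplacian n T * eigvec_mat * eigvec_mat_inv"
    using C by (simp add: assoc_mult_mat[OF C(4,1,3)] inv)
  then have "similar_mat_wit (laplacian n T) eigval_mat eigvec_mat eigvec_mat_inv"
    unfolding laplacian_eigvec_mat using C by (intro similar_mat_witI[OF inv eigvec_mat_inv_mult]) auto
  then have "char_poly (laplacian n T) = char_poly eigval_mat"
    by (intro char_poly_similar) (auto simp: similar_mat_def)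
  also have "\<dots> = (\<Prod>a\<leftarrow>diag_mat eigval_mat. [:- a, 1:])"
    by (rule char_poly_upper_triangular[OF C(2)]) (auto simp: upper_triangular_def eigval_mat_def)
  also have "diag_mat eigval_mat = map (\<lambda>i. real (thr_eigenvalue D n i)) [0..<n]"
    unfolding diag_mat_def eigval_mat_def by auto
  finally show ?thesis .
qed

end

theorem threshold_lap_eigs:
  assumes "threshold_graph n T"
  shows "lap_eigs n T = map (\<lambda>i. real (conj_degree n T i)) [1..<Suc n]"
proof -
  from assms obtain \<sigma> D where "threshold_labelling n T \<sigma> D"
    unfolding threshold_graph_def threshold_labelling_def by blast
  then interpret threshold_labelling n T \<sigma> D .
  have "sorted_wrt (\<lambda>i j. thr_conj_degree D n j \<le> thr_conj_degree D n i) [1..<Suc n]"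
    by (rule sorted_wrt_mono_rel[OF _ sorted_wrt_upt]) (simp add: thr_conj_degree_antimono)
  then have "sorted_wrt (\<ge>) (map (\<lambda>i. real (thr_conj_degree D n i)) [1..<Suc n])"
    by (simp add: sorted_wrt_map)
  moreover have "mset (map (\<lambda>i. real (thr_eigenvalue D n i)) [0..<n])
      = mset (map (\<lambda>i. real (thr_conj_degree D n i)) [1..<Suc n])"
    using arg_cong[OF mset_thr_eigenvalues[of D n], of "image_mset real"]
    by (simp add: image_mset.compositionality comp_def)
  then have "char_poly (laplacian n T)
      = (\<Prod>a\<leftarrow>map (\<lambda>i. real (thr_conj_degree D n i)) [1..<Suc n]. [:- a, 1:])"
    unfolding char_poly_laplacian by (rule linear_factors_eq_if_mset_eq)
  ultimately have "lap_eigs n T = map (\<lambda>i. real (thr_conj_degree D n i)) [1..<Suc n]"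
    by (rule lap_eigs_eqI[OF simple])
  then show ?thesis by (simp add: conj_degree_eq_thr_conj_degree)
qed

section \<open>Laplacian energy\<close>

lemma twice_prefix_sum_eq:
  fixes x :: "nat \<Rightarrow> real"
  assumes "(\<Sum>i<n. x i) = 0" "k \<le> n"
  shows "2 * (\<Sum>i<k. x i) = (\<Sum>i<k. x i) + (\<Sum>i\<in>{k..<n}. - x i)"
proof -
  have "(\<Sum>i<n. x i) = (\<Sum>i<k. x i) + (\<Sum>i\<in>{k..<n}. x i)"
    using assms(2) by (simp add: lessThan_atLeast0 sum.atLeastLessThan_concat)
  with assms(1) show ?thesis by (simp add: sum_negf)
qed

lemma twice_prefix_sum_le_sum_abs:
  fixes x :: "nat \<Rightarrow> real"
  assumes "(\<Sum>i<n. x i) = 0" "k \<le> n"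
  shows "2 * (\<Sum>i<k. x i) \<le> (\<Sum>i<n. \<bar>x i\<bar>)"
proof -
  have "(\<Sum>i<k. x i) + (\<Sum>i\<in>{k..<n}. - x i) \<le> (\<Sum>i<k. \<bar>x i\<bar>) + (\<Sum>i\<in>{k..<n}. \<bar>x i\<bar>)"
    by (intro add_mono sum_mono) auto
  also have "\<dots> = (\<Sum>i<n. \<bar>x i\<bar>)"
    using assms(2) by (simp add: lessThan_atLeast0 sum.atLeastLessThan_concat)
  finally show ?thesis using twice_prefix_sum_eq[OF assms] by simp
qed

lemma sum_abs_eq_twice_prefix_sum:
  fixes x :: "nat \<Rightarrow> real"
  assumes "(\<Sum>i<n. x i) = 0" "k \<le> n"
    and "\<And>i. i < k \<Longrightarrow> 0 \<le> x i" "\<And>i. k \<le> i \<Longrightarrow> i < n \<Longrightarrow> x i \<le> 0"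
  shows "(\<Sum>i<n. \<bar>x i\<bar>) = 2 * (\<Sum>i<k. x i)"
proof -
  have "(\<Sum>i<n. \<bar>x i\<bar>) = (\<Sum>i<k. \<bar>x i\<bar>) + (\<Sum>i\<in>{k..<n}. \<bar>x i\<bar>)"
    using assms(2) by (simp add: lessThan_atLeast0 sum.atLeastLessThan_concat)
  also have "\<dots> = (\<Sum>i<k. x i) + (\<Sum>i\<in>{k..<n}. - x i)"
    using assms(3,4) by (intro arg_cong2[where f="(+)"] sum.cong) auto
  finally show ?thesis using twice_prefix_sum_eq[OF assms(1,2)] by simp
qed

lemma lap_energy_eq_sum:
  assumes "simple_graph n E"
  shows "lap_energy n E = (\<Sum>i<n. \<bar>lap_eigs n E ! i - 2 * real (num_edges n E) / real n\<bar>)"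
  by (simp add: lap_energy_def sum_list_sum_nth lap_eigs_spec(1)[OF assms] lessThan_atLeast0)

lemma sum_lap_eigs_deviation:
  assumes "simple_graph n E" "0 < n"
  shows "(\<Sum>i<n. lap_eigs n E ! i - 2 * real (num_edges n E) / real n) = 0"
  using sum_lap_eigs[OF assms(1)] assms(2)
  by (simp add: sum_subtractf sum_list_sum_nth lap_eigs_spec(1)[OF assms(1)] lessThan_atLeast0)

theorem lemma1:
  fixes n m k :: nat and G T :: "nat \<Rightarrow> nat \<Rightarrow> bool"
  assumes "simple_graph n G" and "num_edges n G = m"
    and "1 \<le> k" and "k \<le> n"
    and "lap_eigs n G ! (k - 1) > 2 * real m / real n"
    and "k < n \<Longrightarrow> 2 * real m / real n \<ge> lap_eigs n G ! k"
    and "threshold_graph n T" and "num_edges n T = m"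
    and "(\<Sum>i=1..k. real (conj_degree n T i)) \<ge> (\<Sum>i=1..k. lap_eigs n G ! (i - 1))"
  shows "lap_energy n T \<ge> lap_energy n G"
proof -
  define c where "c = 2 * real m / real n"
  have T: "simple_graph n T" using assms(7) by (simp add: threshold_graph_def)
  have n: "0 < n" using assms(3,4) by simp
  have eigs_T: "lap_eigs n T ! i = real (conj_degree n T (Suc i))" if "i < n" for i
    using that by (simp add: threshold_lap_eigs[OF assms(7)] del: upt_Suc)
  note sorted_G = sorted_rev_nth_mono[of "lap_eigs n G", unfolded sorted_wrt_rev,
      OF lap_eigs_spec(2)[OF assms(1)], unfolded lap_eigs_spec(1)[OF assms(1)]]
  have "lap_energy n G = 2 * (\<Sum>i<k. lap_eigs n G ! i - c)"
    unfolding lap_energy_eq_sum[OF assms(1)] assms(2) c_def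
  proof (rule sum_abs_eq_twice_prefix_sum[OF _ assms(4)])
    show "(\<Sum>i<n. lap_eigs n G ! i - 2 * real m / real n) = 0"
      using sum_lap_eigs_deviation[OF assms(1) n] assms(2) by simp
    show "0 \<le> lap_eigs n G ! i - 2 * real m / real n" if "i < k" for i
    proof -
      have "lap_eigs n G ! (k - 1) \<le> lap_eigs n G ! i"
        using sorted_G[of i "k - 1"] assms(4) that by simp
      with assms(5) show ?thesis by simp
    qed
    show "lap_eigs n G ! i - 2 * real m / real n \<le> 0" if "k \<le> i" "i < n" for i
      using sorted_G[of k i] assms(6) that by simp
  qed
  also have "\<dots> \<le> 2 * (\<Sum>i<k. lap_eigs n T ! i - c)"
    using assms(4,9) by (simp add: sum_subtractf eigs_T sum.atLeast1_atMost_eq)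
  also have "\<dots> \<le> lap_energy n T"
    unfolding lap_energy_eq_sum[OF T] assms(8) c_def
    by (rule twice_prefix_sum_le_sum_abs[OF _ assms(4)]) (use sum_lap_eigs_deviation[OF T n] assms(8) in simp)
  finally show ?thesis .
qed

end
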